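(* For integers $1\le q\le p<n$ define $$K_n=\Big(\frac2n\Big)^{pq/2}\prod_{j=0}^{q-1}\frac{\Gamma((n-j)/2)}{\Gamma((n-p-j)/2)}.$$ If $p=p_n\to\infty$, $\limsup_{n\to\infty}p/n<1$ and $pq=O(n)$, then as $n\to\infty$ $$\log K_n=-\frac{pq}{2}+\frac{q(q+1)}{4}\log\Big(1+\frac{p}{n-p}\Big)-\frac{pq^3}{12n^2}-c_nq\log\Big(1-\frac pn\Big)+o(1),$$ where $c_n=\frac12(n-p-q-1)$. *)

theory Defs
  imports "HOL-Analysis.Analysis" "HOL-Library.Landau_Symbols"
begin

definition K_const :: "nat \<Rightarrow> nat \<Rightarrow> nat \<Rightarrow> real" where
  "K_const n p q = (2 / real n) powr (real p * real q / 2) *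
     (\<Prod>j<q. Gamma ((real n - real j) / 2) / Gamma ((real n - real p - real j) / 2))"

end

theory Submission
  imports Defs "HOL-Real_Asymp.Real_Asymp"
begin

text \<open>
  Write ln (Gamma x) = (x - 1/2) ln x - x + phi x with the Stirling remainder phi = stirling_rem.
  Then ln K_n is a sum over j < q of differences phi ((n - j)/2) - phi ((n - p - j)/2), of explicit
  terms ((N - j - 1)/2) ln (1 - j/N) for N = n and N = n - p, and of multiples of ln (n/(n - p)).
  Each phi-difference is O(1/(n - p)), because phi x - phi (x + 1) = O(1/x^2) and phi (y + k) - phi k
  tends to 0. Expanding ln (1 - x) to third order, the explicit terms yield the main term, including
  - p q^3/(12 n^2), up to errors of order q/(n - p), q^3/(n - p)^2 and q^5/(n - p)^3. These are
  O(n^(-1/2)), since q^2 \<le> p q = O(n) and n - p \<ge> (1 - r) n for some r < 1.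
\<close>

section \<open>Elementary bounds for the logarithm\<close>

lemma ln_one_minus_cubic_bounds:
  fixes x :: real
  assumes "0 \<le> x" "x \<le> 1/2"
  shows "- (x^4 / 2) \<le> ln (1 - x) + x + x^2/2 + x^3/3"
    and "ln (1 - x) + x + x^2/2 + x^3/3 \<le> 0"
proof -
  let ?g = "\<lambda>t::real. ln (1 - t) + t + t^2/2 + t^3/3 + t^4/2"
  have "?g 0 \<le> ?g x"
  proof (rule deriv_nonneg_imp_mono[where g = "?g" and g' = "\<lambda>t. - 1/(1 - t) + 1 + t + t^2 + 2*t^3"])
    fix t assume t: "t \<in> {0..x}"
    hence t1: "t < 1" using assms by auto
    show "(?g has_real_derivative (- 1/(1 - t) + 1 + t + t^2 + 2*t^3)) (at t)"
      using t1 by - (rule derivative_eq_intros refl | simp)+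
    have "- 1/(1 - t) + 1 + t + t^2 + 2*t^3 = t^3 * (1 - 2*t) / (1 - t)"
      using t1 by (simp add: field_simps power2_eq_square power3_eq_cube; simp add: algebra_simps)
    also have "\<dots> \<ge> 0" using t assms t1 by (intro divide_nonneg_pos mult_nonneg_nonneg) auto
    finally show "0 \<le> - 1/(1 - t) + 1 + t + t^2 + 2*t^3" .
  qed (use assms in auto)
  thus "- (x^4 / 2) \<le> ln (1 - x) + x + x^2/2 + x^3/3" by simp
  let ?k = "\<lambda>t::real. - (ln (1 - t) + t + t^2/2 + t^3/3)"
  have "?k 0 \<le> ?k x"
  proof (rule deriv_nonneg_imp_mono[where g = "?k" and g' = "\<lambda>t. 1/(1 - t) - 1 - t - t^2"])
    fix t assume t: "t \<in> {0..x}"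
    hence t1: "t < 1" using assms by auto
    show "(?k has_real_derivative (1/(1 - t) - 1 - t - t^2)) (at t)"
      using t1 by - (rule derivative_eq_intros refl | simp)+
    have "1/(1 - t) - 1 - t - t^2 = t^3 / (1 - t)"
      using t1 by (simp add: field_simps power2_eq_square power3_eq_cube; simp add: algebra_simps)
    also have "\<dots> \<ge> 0" using t assms t1 by (intro divide_nonneg_pos) auto
    finally show "0 \<le> 1/(1 - t) - 1 - t - t^2" .
  qed (use assms in auto)
  thus "ln (1 - x) + x + x^2/2 + x^3/3 \<le> 0" by simp
qed

lemma ln_one_plus_bounds:
  fixes u :: real
  assumes "0 \<le> u"
  shows "u - u^2/2 \<le> ln (1 + u)" and "ln (1 + u) \<le> u - u^2/2 + u^3/3"
proof -
  let ?g = "\<lambda>t::real. ln (1 + t) - t + t^2/2"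
  have "?g 0 \<le> ?g u"
  proof (rule deriv_nonneg_imp_mono[where g = "?g" and g' = "\<lambda>t. 1/(1 + t) - 1 + t"])
    fix t assume t: "t \<in> {0..u}"
    show "(?g has_real_derivative (1/(1 + t) - 1 + t)) (at t)"
      using t by - (rule derivative_eq_intros refl | simp)+
    have "1/(1 + t) - 1 + t = t^2 / (1 + t)"
      using t by (simp add: field_simps power2_eq_square)
    also have "\<dots> \<ge> 0" using t by (intro divide_nonneg_pos) auto
    finally show "0 \<le> 1/(1 + t) - 1 + t" .
  qed (use assms in auto)
  thus "u - u^2/2 \<le> ln (1 + u)" by simp
  let ?k = "\<lambda>t::real. t - t^2/2 + t^3/3 - ln (1 + t)"
  have "?k 0 \<le> ?k u"
  proof (rule deriv_nonneg_imp_mono[where g = "?k" and g' = "\<lambda>t. 1 - t + t^2 - 1/(1 + t)"])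
    fix t assume t: "t \<in> {0..u}"
    show "(?k has_real_derivative (1 - t + t^2 - 1/(1 + t))) (at t)"
      using t by - (rule derivative_eq_intros refl | simp)+
    have "1 - t + t^2 - 1/(1 + t) = t^3 / (1 + t)"
      using t by (simp add: field_simps power2_eq_square power3_eq_cube; simp add: algebra_simps)
    also have "\<dots> \<ge> 0" using t by (intro divide_nonneg_pos) auto
    finally show "0 \<le> 1 - t + t^2 - 1/(1 + t)" .
  qed (use assms in auto)
  thus "ln (1 + u) \<le> u - u^2/2 + u^3/3" by simp
qed

section \<open>The Stirling remainder\<close>

definition stirling_rem :: "real \<Rightarrow> real" where
  "stirling_rem x = ln (Gamma x) - (x - 1/2) * ln x + x"

lemma stirling_rem_diff_plus1:
  assumes "x > 0"
  shows "stirling_rem x - stirling_rem (x + 1) = (x + 1/2) * ln (1 + 1/x) - 1"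
proof -
  have "x \<notin> \<int>\<^sub>\<le>\<^sub>0" using assms by (auto elim!: nonpos_Ints_cases)
  hence "ln (Gamma (x + 1)) = ln x + ln (Gamma x)"
    using assms by (simp add: Gamma_plus1 ln_mult_pos)
  moreover have "ln (1 + 1/x) = ln (x + 1) - ln x"
    using assms by (simp add: field_simps ln_div)
  ultimately show ?thesis
    unfolding stirling_rem_def by (simp only:) (simp add: algebra_simps)
qed

lemma abs_stirling_rem_diff_plus1_le:
  assumes "x \<ge> 1"
  shows "\<bar>stirling_rem x - stirling_rem (x + 1)\<bar> \<le> 1 / x^2"
proof -
  have u: "1/x \<ge> 0" using assms by simp
  have xp: "x + 1/2 > 0" using assms by simp
  have "(x + 1/2) * (1/x - (1/x)^2/2) \<le> (x + 1/2) * ln (1 + 1/x)"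
    using ln_one_plus_bounds(1)[OF u] xp by (intro mult_left_mono) auto
  moreover have "(x + 1/2) * ln (1 + 1/x) \<le> (x + 1/2) * (1/x - (1/x)^2/2 + (1/x)^3/3)"
    using ln_one_plus_bounds(2)[OF u] xp by (intro mult_left_mono) auto
  moreover have "(x + 1/2) * (1/x - (1/x)^2/2) = 1 - 1/(4*x^2)"
    using assms by (simp add: field_simps power2_eq_square)
  moreover have "(x + 1/2) * (1/x - (1/x)^2/2 + (1/x)^3/3) = 1 + 1/(12*x^2) + 1/(6*x^3)"
    using assms by (simp add: field_simps power2_eq_square power3_eq_cube)
  moreover have "1/(6*x^3) \<le> 1/(6*x^2)"
    using assms by (simp add: field_simps power2_eq_square power3_eq_cube)
  moreover have "1/(4*x^2) \<le> 1/x^2" "1/(12*x^2) + 1/(6*x^2) \<le> 1/x^2"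
    using assms by (simp_all add: field_simps)
  ultimately show ?thesis using stirling_rem_diff_plus1[of x] assms by (simp add: abs_le_iff)
qed

lemma abs_stirling_rem_diff_add_nat_le:
  assumes "x \<ge> 1"
  shows "\<bar>stirling_rem x - stirling_rem (x + real k)\<bar> \<le> 2/x - 2/(x + real k)"
proof (induction k)
  case 0
  then show ?case by simp
next
  case (Suc k)
  let ?y = "x + real k"
  have y1: "?y \<ge> 1" using assms by simp
  have "\<bar>stirling_rem ?y - stirling_rem (?y + 1)\<bar> \<le> 1/?y^2"
    by (rule abs_stirling_rem_diff_plus1_le[OF y1])
  also have "\<dots> = 2/(2*?y^2)" by simp
  also have "\<dots> \<le> 2/(?y * (?y + 1))"
    using y1 by (intro divide_left_mono) (auto simp: power2_eq_square)
  also have "\<dots> = 2/?y - 2/(?y + 1)"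
    using y1 by (simp add: field_simps)
  finally have step: "\<bar>stirling_rem ?y - stirling_rem (?y + 1)\<bar> \<le> 2/?y - 2/(?y + 1)" .
  have shift: "x + real (Suc k) = ?y + 1" by simp
  show ?case unfolding shift using Suc.IH step by linarith
qed

lemma ln_Gamma_series_div_Gamma:
  fixes y :: real
  assumes "y > 0" "k \<ge> 1"
  shows "ln (Gamma_series y k / Gamma y)
           = ln (Gamma (real k + 1)) + y * ln (real k) - ln (Gamma (y + real k + 1))"
proof -
  have Gamma_nonzero: "Gamma t \<noteq> 0" if "t > 0" for t :: real
    using Gamma_real_pos[OF that] by linarith
  have "y \<notin> \<int>\<^sub>\<le>\<^sub>0" using assms by (auto elim!: nonpos_Ints_cases)
  hence "pochhammer y (k + 1) = Gamma (y + real (k + 1)) / Gamma y"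
    by (rule pochhammer_Gamma)
  moreover have "fact k = Gamma (real k + 1)"
    using Gamma_fact[of k, where 'a = real] by (simp add: add.commute)
  ultimately have "Gamma_series y k / Gamma y
                     = Gamma (real k + 1) * exp (y * ln (real k)) / Gamma (y + real k + 1)"
    using assms Gamma_nonzero[of y] unfolding Gamma_series_def by (simp add: field_simps add_ac)
  also have "ln \<dots> = ln (Gamma (real k + 1)) + y * ln (real k) - ln (Gamma (y + real k + 1))"
    using assms by (simp add: ln_div ln_mult Gamma_nonzero)
  finally show ?thesis .
qed

text \<open>Gauss's product formula for Gamma shows that the Stirling remainder forgets shifts of
  its argument at infinity.\<close>
lemma stirling_rem_shift_tendsto_0:
  assumes "y > 0"
  shows "(\<lambda>k. stirling_rem (y + real k) - stirling_rem (real k)) \<longlonglongrightarrow> 0"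
proof -
  have Gamma_pos: "Gamma y > 0" using assms by simp
  hence "(\<lambda>k. Gamma_series y k / Gamma y) \<longlonglongrightarrow> Gamma y / Gamma y"
    by (intro tendsto_intros) (use Gamma_pos in auto)
  hence "(\<lambda>k. ln (Gamma_series y k / Gamma y)) \<longlonglongrightarrow> ln 1"
    by (intro tendsto_ln) (use Gamma_pos in auto)
  moreover have "(\<lambda>k::nat. y * ln (real k) - (y + real k + 1/2) * ln (y + real k + 1)
                    + (real k + 1/2) * ln (real k + 1) + y) \<longlonglongrightarrow> 0"
    using assms by real_asymp
  ultimately have "(\<lambda>k. (y * ln (real k) - (y + real k + 1/2) * ln (y + real k + 1)
                    + (real k + 1/2) * ln (real k + 1) + y) - ln (Gamma_series y k / Gamma y))
                   \<longlonglongrightarrow> 0"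
    using tendsto_diff by fastforce
  moreover have "eventually (\<lambda>k. (y * ln (real k) - (y + real k + 1/2) * ln (y + real k + 1)
                    + (real k + 1/2) * ln (real k + 1) + y) - ln (Gamma_series y k / Gamma y)
                  = stirling_rem (y + real (Suc k)) - stirling_rem (real (Suc k))) sequentially"
    using eventually_ge_at_top[of "1::nat"]
    by eventually_elim
      (simp add: ln_Gamma_series_div_Gamma[OF assms] stirling_rem_def algebra_simps)
  ultimately have "(\<lambda>k. stirling_rem (y + real (Suc k)) - stirling_rem (real (Suc k))) \<longlonglongrightarrow> 0"
    by (rule Lim_transform_eventually)
  thus ?thesis by (subst filterlim_sequentially_Suc[symmetric])
qed

lemma abs_stirling_rem_diff_le:
  assumes "a \<ge> 1" "b \<ge> 1"
  shows "\<bar>stirling_rem a - stirling_rem b\<bar> \<le> 2/a + 2/b"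
proof -
  have "(\<lambda>k. (stirling_rem (a + real k) - stirling_rem (real k))
           - (stirling_rem (b + real k) - stirling_rem (real k))) \<longlonglongrightarrow> 0 - 0"
    using assms by (intro tendsto_diff stirling_rem_shift_tendsto_0) auto
  hence "(\<lambda>k. 2/a + 2/b + \<bar>stirling_rem (a + real k) - stirling_rem (b + real k)\<bar>)
           \<longlonglongrightarrow> 2/a + 2/b + \<bar>0\<bar>"
    by (intro tendsto_intros) simp
  moreover have "\<bar>stirling_rem a - stirling_rem b\<bar>
                   \<le> 2/a + 2/b + \<bar>stirling_rem (a + real k) - stirling_rem (b + real k)\<bar>" for k
  proof -
    have "0 \<le> 2 / (a + real k)" "0 \<le> 2 / (b + real k)" using assms by simp_all
    thus ?thesis
      using abs_stirling_rem_diff_add_nat_le[OF assms(1), of k]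
        abs_stirling_rem_diff_add_nat_le[OF assms(2), of k] by linarith
  qed
  ultimately show ?thesis
    by (intro LIMSEQ_le_const) auto
qed

section \<open>Decomposition of ln K\<close>

definition shift_log :: "real \<Rightarrow> real \<Rightarrow> real" where
  "shift_log N j = (N - j - 1) / 2 * ln (1 - j / N)"

text \<open>The cubic Taylor polynomial of ln (1 - x) at x = j/N, substituted into shift_log
  and multiplied out.\<close>
definition shift_log_poly :: "real \<Rightarrow> real \<Rightarrow> real" where
  "shift_log_poly N j = - j/2 + (j^2 + 2*j) / (4*N) + (j^3 + 3*j^2) / (12*N^2)
                          + (j^4 + j^3) / (6*N^3)"

lemma abs_shift_log_minus_poly_le:
  assumes "N > 0" "0 \<le> j" "2 * j \<le> N" "j + 1 \<le> N"
  shows "\<bar>shift_log N j - shift_log_poly N j\<bar> \<le> j^4 / (4 * N^3)"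
proof -
  define x where "x = j / N"
  have x: "0 \<le> x" "x \<le> 1/2" using assms by (auto simp: x_def field_simps)
  define r where "r = ln (1 - x) + x + x^2/2 + x^3/3"
  have r: "- (x^4 / 2) \<le> r" "r \<le> 0"
    unfolding r_def using ln_one_minus_cubic_bounds[OF x] by auto
  have ln_eq: "ln (1 - j / N) = r - x - x^2/2 - x^3/3" unfolding r_def x_def by simp
  have "shift_log N j = (N - j - 1) / 2 * (- x - x^2/2 - x^3/3) + (N - j - 1) / 2 * r"
    unfolding shift_log_def ln_eq by (simp add: field_simps)
  also have "(N - j - 1) / 2 * (- x - x^2/2 - x^3/3) = shift_log_poly N j"
    unfolding shift_log_poly_def x_def using assms
    by (simp add: field_simps power2_eq_square power3_eq_cube power4_eq_xxxx)
  finally have split: "shift_log N j - shift_log_poly N j = (N - j - 1) / 2 * r" by simp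
  have c: "0 \<le> (N - j - 1) / 2" "(N - j - 1) / 2 \<le> N / 2" using assms by auto
  have "\<bar>(N - j - 1) / 2 * r\<bar> = (N - j - 1) / 2 * (- r)"
    using c r by (simp add: abs_mult abs_of_nonpos)
  also have "\<dots> \<le> N / 2 * (x^4 / 2)"
    using c r by (intro mult_mono) auto
  also have "\<dots> = j^4 / (4 * N^3)"
    unfolding x_def using assms by (simp add: field_simps power4_eq_xxxx power3_eq_cube)
  finally show ?thesis unfolding split .
qed

lemma ln_Gamma_half_eq:
  fixes N j :: real
  assumes "0 \<le> j" "j < N"
  shows "ln (Gamma ((N - j) / 2))
           = stirling_rem ((N - j) / 2) + (N - j - 1) / 2 * ln (N / 2) + shift_log N j - (N - j) / 2"
proof -
  have "(N - j) / 2 = N / 2 * (1 - j / N)" using assms by (simp add: field_simps)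
  hence "ln ((N - j) / 2) = ln (N / 2) + ln (1 - j / N)"
    using assms by (simp only:) (intro ln_mult_pos; simp add: field_simps)
  thus ?thesis unfolding stirling_rem_def shift_log_def by (simp add: field_simps)
qed

lemma ln_Gamma_half_diff_eq:
  fixes N M j :: real
  assumes "0 \<le> j" "j < M" "M \<le> N"
  shows "ln (Gamma ((N - j) / 2)) - ln (Gamma ((M - j) / 2)) + (N - M) / 2 * ln (2 / N)
           = stirling_rem ((N - j) / 2) - stirling_rem ((M - j) / 2)
             + shift_log N j - shift_log M j + (M - j - 1) / 2 * ln (N / M) - (N - M) / 2"
proof -
  have "j < N" using assms by simp
  have ln_quot: "ln (2 / N) = - ln (N / 2)" "ln (N / M) = ln (N / 2) - ln (M / 2)"
    using assms by (simp_all add: ln_div)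
  show ?thesis
    unfolding ln_Gamma_half_eq[OF assms(1,2)] ln_Gamma_half_eq[OF assms(1) \<open>j < N\<close>] ln_quot
    by (simp add: field_simps)
qed

lemma ln_K_const_eq:
  assumes "p + q < n"
  shows "ln (K_const n p q) = (\<Sum>j<q. ln (Gamma ((real n - real j) / 2))
            - ln (Gamma ((real n - real p - real j) / 2)) + real p / 2 * ln (2 / real n))"
proof -
  have pos: "Gamma ((real n - real j) / 2) > 0" "Gamma ((real n - real p - real j) / 2) > 0"
    if "j < q" for j
    using that assms by auto
  have nonzero:
    "Gamma ((real n - real j) / 2) \<noteq> 0" "Gamma ((real n - real p - real j) / 2) \<noteq> 0"
    if "j < q" for j
    using pos[OF that] by simp_all
  have "ln (\<Prod>j<q. Gamma ((real n - real j) / 2) / Gamma ((real n - real p - real j) / 2))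
          = (\<Sum>j<q. ln (Gamma ((real n - real j) / 2) / Gamma ((real n - real p - real j) / 2)))"
    by (rule ln_prod) (simp_all add: nonzero)
  hence "ln (K_const n p q) = real p * real q / 2 * ln (2 / real n)
          + (\<Sum>j<q. ln (Gamma ((real n - real j) / 2) / Gamma ((real n - real p - real j) / 2)))"
    unfolding K_const_def using assms pos
    by (simp add: ln_mult ln_powr prod_pos less_imp_neq[symmetric])
  moreover have
    "(\<Sum>j<q. ln (Gamma ((real n - real j) / 2) / Gamma ((real n - real p - real j) / 2)))
      = (\<Sum>j<q. ln (Gamma ((real n - real j) / 2)) - ln (Gamma ((real n - real p - real j) / 2)))"
    by (intro sum.cong) (simp_all add: nonzero ln_div)
  ultimately show ?thesis by (simp add: sum.distrib)
qed

definition ln_K_approx :: "nat \<Rightarrow> nat \<Rightarrow> nat \<Rightarrow> real" where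
  "ln_K_approx n p q = - real p * real q / 2
      + real q * (real q + 1) / 4 * ln (1 + real p / (real n - real p))
      - real p * real q ^ 3 / (12 * real n ^ 2)
      - (real n - real p - real q - 1) / 2 * real q * ln (1 - real p / real n)"

lemma ln_K_const_minus_approx_eq:
  assumes "p + q < n"
  shows "ln (K_const n p q) - ln_K_approx n p q
           = (\<Sum>j<q. stirling_rem ((real n - real j) / 2)
                       - stirling_rem ((real n - real p - real j) / 2))
             + (\<Sum>j<q. shift_log (real n) (real j) - shift_log (real n - real p) (real j))
             + real p * real q ^ 3 / (12 * real n ^ 2)"
proof -
  define M where "M = real n - real p"
  have M: "real q < M" "M \<le> real n" using assms by (auto simp: M_def)
  have "ln (K_const n p q) = (\<Sum>j<q. stirling_rem ((real n - real j) / 2)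
          - stirling_rem ((M - real j) / 2) + shift_log (real n) (real j) - shift_log M (real j)
          + (M - real j - 1) / 2 * ln (real n / M) - real p / 2)"
    unfolding ln_K_const_eq[OF assms] M_def[symmetric]
    using ln_Gamma_half_diff_eq[of _ M "real n"] M by (intro sum.cong) (auto simp: M_def)
  also have "\<dots> = (\<Sum>j<q. stirling_rem ((real n - real j) / 2) - stirling_rem ((M - real j) / 2))
          + (\<Sum>j<q. shift_log (real n) (real j) - shift_log M (real j))
          + ln (real n / M) * (\<Sum>j<q. (M - real j - 1) / 2) - real q * real p / 2"
    by (simp add: sum.distrib sum_subtractf sum_distrib_left algebra_simps)
  also have "(\<Sum>j<q. (M - real j - 1) / 2) = real q * (M - 1) / 2 - real q * (real q - 1) / 4"
    by (induction q) (auto simp: field_simps)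
  finally have ln_K: "ln (K_const n p q)
    = (\<Sum>j<q. stirling_rem ((real n - real j) / 2) - stirling_rem ((M - real j) / 2))
      + (\<Sum>j<q. shift_log (real n) (real j) - shift_log M (real j))
      + ln (real n / M) * (real q * (M - 1) / 2 - real q * (real q - 1) / 4)
      - real q * real p / 2" .
  have approx: "ln_K_approx n p q
    = - real p * real q / 2 + real q * (real q + 1) / 4 * ln (real n / M)
      - real p * real q ^ 3 / (12 * real n ^ 2) + (M - real q - 1) / 2 * real q * ln (real n / M)"
  proof -
    have "1 + real p / (real n - real p) = real n / M" "1 - real p / real n = M / real n"
      using M by (auto simp: M_def field_simps)
    moreover have "ln (M / real n) = - ln (real n / M)" using M by (simp add: ln_div)
    ultimately show ?thesis unfolding ln_K_approx_def M_def[symmetric] by simp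
  qed
  show ?thesis unfolding ln_K approx unfolding M_def by (simp add: field_simps)
qed

section \<open>Error estimates\<close>

lemma abs_sum_lessThan_le:
  fixes f :: "nat \<Rightarrow> real"
  assumes "\<And>j. j < q \<Longrightarrow> \<bar>f j\<bar> \<le> B"
  shows "\<bar>\<Sum>j<q. f j\<bar> \<le> real q * B"
proof -
  have "\<bar>\<Sum>j<q. f j\<bar> \<le> (\<Sum>j<q. \<bar>f j\<bar>)" by (rule sum_abs)
  also have "\<dots> \<le> (\<Sum>j<q. B)" using assms by (intro sum_mono) auto
  finally show ?thesis by simp
qed

lemma abs_sum_times_const_le:
  fixes f :: "nat \<Rightarrow> real"
  assumes "\<And>j. j < q \<Longrightarrow> 0 \<le> f j" "\<And>j. j < q \<Longrightarrow> f j \<le> B"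
  shows "\<bar>\<Sum>j<q. f j * c\<bar> \<le> real q * B * \<bar>c\<bar>"
proof -
  have "0 \<le> (\<Sum>j<q. f j)" by (intro sum_nonneg) (use assms(1) in auto)
  hence "\<bar>\<Sum>j<q. f j * c\<bar> = (\<Sum>j<q. f j) * \<bar>c\<bar>"
    by (simp add: sum_distrib_right[symmetric] abs_mult)
  also have "\<dots> \<le> real q * B * \<bar>c\<bar>"
    using sum_bounded_above[of "{..<q}" f B] assms(2) by (intro mult_right_mono) auto
  finally show ?thesis .
qed

text \<open>The leading term (q^3/12) (1/N - 1/M) = - P q^3 / (12 N M) cancels P q^3 / (12 N^2) up to
  (P q)^2 q / (12 N^2 M).\<close>
lemma abs_quadratic_shift_terms_le:
  fixes N M P Q D :: real
  assumes Q: "1 \<le> Q" "Q \<le> P" and M: "0 < M" and PQ: "P * Q \<le> D * M" and D: "0 \<le> D"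
    and N: "N = M + P"
  shows "\<bar>(Q^3/3 + Q^2/2 - 5*Q/6) / 4 * (1/N - 1/M) + P * Q^3 / (12 * N^2)\<bar>
           \<le> (D^2 + D) * Q / M"
proof -
  have N_pos: "N > 0" and MN: "M \<le> N" and "P = N - M" using N M Q by linarith+
  have eq: "(Q^3/3 + Q^2/2 - 5*Q/6) / 4 * (1/N - 1/M) + P * Q^3 / (12 * N^2)
              = - ((P * Q)^2 * Q / (12 * N^2 * M)) - P * Q * (Q/2 - 5/6) / (4 * N * M)"
    unfolding \<open>P = N - M\<close> using M N_pos
    by (simp add: field_simps power2_eq_square power3_eq_cube; simp add: algebra_simps)
  have "(P * Q)^2 \<le> (D * N)^2"
    using PQ MN M D Q by (intro power_mono order.trans[OF PQ] mult_left_mono) auto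
  hence "(P * Q)^2 * Q / (12 * N^2 * M) \<le> (D * N)^2 * Q / (12 * N^2 * M)"
    using N_pos M Q by (intro divide_right_mono mult_right_mono) auto
  also have "\<dots> \<le> D^2 * Q / M"
    using N_pos M Q D by (simp add: field_simps power2_eq_square)
  finally have quadratic: "(P * Q)^2 * Q / (12 * N^2 * M) \<le> D^2 * Q / M" .
  have "\<bar>P * Q * (Q/2 - 5/6)\<bar> = (P * Q) * \<bar>Q/2 - 5/6\<bar>"
    using Q by (simp add: abs_mult)
  also have "\<dots> \<le> (D * M) * Q"
    by (rule mult_mono[OF PQ]) (use Q M D in auto)
  finally have "\<bar>P * Q * (Q/2 - 5/6)\<bar> \<le> (D * M) * Q" .
  have "\<bar>P * Q * (Q/2 - 5/6) / (4 * N * M)\<bar> = \<bar>P * Q * (Q/2 - 5/6)\<bar> / (4 * N * M)"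
    using N_pos M by (simp add: abs_divide)
  also have "\<dots> \<le> (D * M) * Q / (4 * N * M)"
    using N_pos M \<open>\<bar>P * Q * (Q/2 - 5/6)\<bar> \<le> (D * M) * Q\<close> by (intro divide_right_mono) auto
  also have "\<dots> = D * Q / (4 * N)"
    using M by (simp add: field_simps)
  also have "\<dots> \<le> D * Q / M"
    using M N_pos MN D Q by (intro frac_le) auto
  finally have linear: "\<bar>P * Q * (Q/2 - 5/6) / (4 * N * M)\<bar> \<le> D * Q / M" .
  have "0 \<le> (P * Q)^2 * Q / (12 * N^2 * M)" using Q M by simp
  moreover have "(D^2 + D) * Q / M = D^2 * Q / M + D * Q / M"
    by (simp add: add_divide_distrib distrib_right)
  ultimately show ?thesis unfolding eq using quadratic linear by linarith
qed

lemma abs_cubic_shift_terms_le: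
  fixes N M P D :: real
  assumes Q: "1 \<le> real q" "real q \<le> P" and M: "0 < M" and PQ: "P * real q \<le> D * M"
    and D: "0 \<le> D" and N: "N = M + P"
  shows "\<bar>\<Sum>j<q. (real j^3 + 3 * real j^2) / 12 * (1/N^2 - 1/M^2)\<bar> \<le> D * real q^3 / M^2"
proof -
  have N_pos: "N > 0" and MN: "M \<le> N" and "P = N - M" using N M Q by linarith+
  have "1/N^2 - 1/M^2 = - (P * (N + M) / (N^2 * M^2))"
    unfolding \<open>P = N - M\<close> using M N_pos
    by (simp add: field_simps power2_eq_square; simp add: algebra_simps)
  hence "\<bar>1/N^2 - 1/M^2\<bar> = P * (N + M) / (N^2 * M^2)" using Q M N_pos by simp
  also have "\<dots> \<le> P * (2 * N) / (N^2 * M^2)"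
    using Q M N_pos MN by (intro divide_right_mono mult_left_mono) auto
  also have "\<dots> = 2 * P / (N * M^2)" using N_pos by (simp add: field_simps power2_eq_square)
  finally have c: "\<bar>1/N^2 - 1/M^2\<bar> \<le> 2 * P / (N * M^2)" .
  have bound: "real j^3 + 3 * real j^2 \<le> 4 * real q^3" if "j < q" for j
  proof -
    have "real j^3 \<le> real q^3" "real j^2 \<le> real q^2" using that by (simp_all add: power_mono)
    moreover have "real q^2 \<le> real q^3" using Q by (simp add: power_increasing)
    ultimately show ?thesis by linarith
  qed
  hence "\<bar>\<Sum>j<q. (real j^3 + 3 * real j^2) / 12 * (1/N^2 - 1/M^2)\<bar>
           \<le> real q * (real q^3 / 3) * \<bar>1/N^2 - 1/M^2\<bar>"
    by (intro abs_sum_times_const_le) (auto dest!: bound)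
  also have "\<dots> \<le> real q * (real q^3 / 3) * (2 * P / (N * M^2))"
    using c by (intro mult_left_mono) auto
  also have "\<dots> = (2/3) * (P * real q) * real q^3 / (N * M^2)"
    by (simp add: field_simps)
  also have "\<dots> \<le> (2/3) * (D * M) * real q^3 / (N * M^2)"
    using PQ N_pos M by (intro divide_right_mono mult_right_mono mult_left_mono) auto
  also have "\<dots> = (2/3) * D * real q^3 / (N * M)" using M by (simp add: field_simps power2_eq_square)
  also have "\<dots> \<le> D * real q^3 / (M * M)"
    using N_pos M MN D by (intro frac_le) (auto intro!: mult_mono)
  finally show ?thesis by (simp add: power2_eq_square)
qed

lemma abs_quartic_shift_terms_le:
  fixes N M :: real
  assumes "0 < M" "M \<le> N"
  shows "\<bar>\<Sum>j<q. (real j^4 + real j^3) / 6 * (1/N^3 - 1/M^3)\<bar> \<le> real q^5 / (3 * M^3)"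
proof -
  have "1/N^3 \<le> 1/M^3" using assms by (intro divide_left_mono power_mono) auto
  hence c: "\<bar>1/N^3 - 1/M^3\<bar> \<le> 1/M^3" using assms by (simp add: abs_le_iff)
  have bound: "real j^4 + real j^3 \<le> 2 * real q^4" if "j < q" for j
  proof -
    have "real j^4 \<le> real q^4" "real j^3 \<le> real q^3" using that by (simp_all add: power_mono)
    moreover have "real q^3 \<le> real q^4" using that by (simp add: power_increasing)
    ultimately show ?thesis by linarith
  qed
  hence "\<bar>\<Sum>j<q. (real j^4 + real j^3) / 6 * (1/N^3 - 1/M^3)\<bar>
           \<le> real q * (real q^4 / 3) * \<bar>1/N^3 - 1/M^3\<bar>"
    by (intro abs_sum_times_const_le) (auto dest!: bound)
  also have "\<dots> \<le> real q * (real q^4 / 3) * (1/M^3)"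
    using c by (intro mult_left_mono) auto
  also have "\<dots> = real q^5 / (3 * M^3)" by (simp add: field_simps power_Suc[symmetric])
  finally show ?thesis .
qed

lemma abs_sum_shift_log_poly_diff_le:
  fixes N M P D :: real
  assumes Q: "1 \<le> real q" "real q \<le> P" and M: "0 < M" and PQ: "P * real q \<le> D * M"
    and D: "0 \<le> D" and N: "N = M + P"
  shows "\<bar>(\<Sum>j<q. shift_log_poly N (real j) - shift_log_poly M (real j))
            + P * real q^3 / (12 * N^2)\<bar>
           \<le> (D^2 + D) * real q / M + D * real q^3 / M^2 + real q^5 / (3 * M^3)"
proof -
  have N_pos: "N > 0" and MN: "M \<le> N" using N M Q by linarith+
  have "(\<Sum>j<q. shift_log_poly N (real j) - shift_log_poly M (real j))
     = (\<Sum>j<q. (real j^2 + 2 * real j) / 4 * (1/N - 1/M)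
              + (real j^3 + 3 * real j^2) / 12 * (1/N^2 - 1/M^2)
              + (real j^4 + real j^3) / 6 * (1/N^3 - 1/M^3))"
    unfolding shift_log_poly_def using N_pos M by (intro sum.cong) (simp_all add: field_simps)
  also have "\<dots> = (\<Sum>j<q. (real j^2 + 2 * real j) / 4 * (1/N - 1/M))
              + (\<Sum>j<q. (real j^3 + 3 * real j^2) / 12 * (1/N^2 - 1/M^2))
              + (\<Sum>j<q. (real j^4 + real j^3) / 6 * (1/N^3 - 1/M^3))"
    by (simp only: sum.distrib)
  also have "(\<Sum>j<q. (real j^2 + 2 * real j) / 4 * (1/N - 1/M))
               = (\<Sum>j<q. real j^2 + 2 * real j) / 4 * (1/N - 1/M)"
    by (simp only: sum_distrib_right sum_divide_distrib)
  also have "(\<Sum>j<q. real j^2 + 2 * real j) = real q^3/3 + real q^2/2 - 5 * real q/6"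
    by (induction q) (auto simp: field_simps power2_eq_square power3_eq_cube)
  finally show ?thesis
    using abs_quadratic_shift_terms_le[OF Q M PQ D N] abs_cubic_shift_terms_le[OF Q M PQ D N]
      abs_quartic_shift_terms_le[OF M MN, of q]
    by linarith
qed

lemma abs_sum_stirling_rem_diff_le:
  fixes N M :: real
  assumes "4 \<le> M" "2 * real q \<le> M" "M \<le> N"
  shows "\<bar>\<Sum>j<q. stirling_rem ((N - real j) / 2) - stirling_rem ((M - real j) / 2)\<bar>
           \<le> real q * (16 / M)"
proof (rule abs_sum_lessThan_le)
  fix j assume "j < q"
  hence M_quarter: "M / 4 \<le> (M - real j) / 2" using assms by simp
  hence "\<bar>stirling_rem ((N - real j) / 2) - stirling_rem ((M - real j) / 2)\<bar>
           \<le> 2 / ((N - real j) / 2) + 2 / ((M - real j) / 2)"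
    using assms by (intro abs_stirling_rem_diff_le) auto
  also have "\<dots> \<le> 2 / (M / 4) + 2 / (M / 4)"
    using M_quarter assms by (intro add_mono divide_left_mono) auto
  finally show "\<bar>stirling_rem ((N - real j) / 2) - stirling_rem ((M - real j) / 2)\<bar> \<le> 16 / M"
    by simp
qed

lemma abs_sum_shift_log_error_le:
  fixes N M :: real
  assumes "0 < M" "M \<le> N" "2 * real q \<le> M"
  shows "\<bar>\<Sum>j<q. (shift_log N (real j) - shift_log_poly N (real j))
                  - (shift_log M (real j) - shift_log_poly M (real j))\<bar>
           \<le> real q^5 / (2 * M^3)"
proof -
  have "\<bar>(shift_log N (real j) - shift_log_poly N (real j))
            - (shift_log M (real j) - shift_log_poly M (real j))\<bar> \<le> real q^4 / (2 * M^3)"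
    if "j < q" for j
  proof -
    have j: "2 * real j \<le> M" "real j + 1 \<le> M" "real j^4 \<le> real q^4"
      using that assms by (auto intro: power_mono)
    have "\<bar>shift_log N (real j) - shift_log_poly N (real j)\<bar> \<le> real j^4 / (4 * N^3)"
      using j assms by (intro abs_shift_log_minus_poly_le) auto
    also have "\<dots> \<le> real q^4 / (4 * M^3)"
      using j assms by (intro frac_le) (auto intro: power_mono)
    moreover have "\<bar>shift_log M (real j) - shift_log_poly M (real j)\<bar> \<le> real j^4 / (4 * M^3)"
      using j assms by (intro abs_shift_log_minus_poly_le) auto
    moreover have "\<dots> \<le> real q^4 / (4 * M^3)"
      using j assms by (intro divide_right_mono) auto
    ultimately show ?thesis by linarith
  qed
  hence "\<bar>\<Sum>j<q. (shift_log N (real j) - shift_log_poly N (real j))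
                  - (shift_log M (real j) - shift_log_poly M (real j))\<bar>
           \<le> real q * (real q^4 / (2 * M^3))"
    by (rule abs_sum_lessThan_le)
  also have "\<dots> = real q^5 / (2 * M^3)" by (simp add: power_def)
  finally show ?thesis .
qed

lemma abs_ln_K_const_minus_approx_le:
  fixes D :: real
  assumes q: "1 \<le> q" "q \<le> p" and M: "4 \<le> real n - real p" "2 * real q \<le> real n - real p"
    and PQ: "real p * real q \<le> D * (real n - real p)" and D: "0 \<le> D"
  shows "\<bar>ln (K_const n p q) - ln_K_approx n p q\<bar>
           \<le> (16 + D^2 + D) * real q / (real n - real p) + D * real q^3 / (real n - real p)^2
             + real q^5 / (real n - real p)^3"
proof -
  define M where "M = real n - real p"
  have M_pos: "0 < M" and "M \<le> real n" and "real n = M + real p"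
    using M unfolding M_def by linarith+
  have "p + q < n" using q M by linarith
  have "ln (K_const n p q) - ln_K_approx n p q
          = (\<Sum>j<q. stirling_rem ((real n - real j) / 2) - stirling_rem ((M - real j) / 2))
            + (\<Sum>j<q. shift_log_poly (real n) (real j) - shift_log_poly M (real j))
            + real p * real q ^ 3 / (12 * real n ^ 2)
            + (\<Sum>j<q. (shift_log (real n) (real j) - shift_log_poly (real n) (real j))
                      - (shift_log M (real j) - shift_log_poly M (real j)))"
    unfolding ln_K_const_minus_approx_eq[OF \<open>p + q < n\<close>] M_def[symmetric]
    by (simp add: sum.distrib[symmetric] algebra_simps)
  moreover have "\<bar>\<Sum>j<q. stirling_rem ((real n - real j) / 2) - stirling_rem ((M - real j) / 2)\<bar>
                   \<le> real q * (16 / M)"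
    using M \<open>M \<le> real n\<close> unfolding M_def by (intro abs_sum_stirling_rem_diff_le) auto
  moreover have "\<bar>(\<Sum>j<q. shift_log_poly (real n) (real j) - shift_log_poly M (real j))
                     + real p * real q ^ 3 / (12 * real n ^ 2)\<bar>
                   \<le> (D^2 + D) * real q / M + D * real q^3 / M^2 + real q^5 / (3 * M^3)"
    using q M_pos PQ D \<open>real n = M + real p\<close>
    by (intro abs_sum_shift_log_poly_diff_le) auto
  moreover have "\<bar>\<Sum>j<q. (shift_log (real n) (real j) - shift_log_poly (real n) (real j))
                      - (shift_log M (real j) - shift_log_poly M (real j))\<bar>
                   \<le> real q^5 / (2 * M^3)"
    using M_pos \<open>M \<le> real n\<close> M unfolding M_def by (intro abs_sum_shift_log_error_le) auto
  moreover have "real q^5 / (3 * M^3) + real q^5 / (2 * M^3) \<le> real q^5 / M^3"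
    using M_pos by (simp add: field_simps)
  moreover have "(16 + D^2 + D) * real q / M = real q * (16 / M) + (D^2 + D) * real q / M"
    using M_pos by (simp add: field_simps)
  ultimately show ?thesis unfolding M_def[symmetric] by linarith
qed

lemma error_bound_le_sqrt:
  fixes Q M D :: real
  assumes Q: "0 \<le> Q" and M: "0 < M" and Q2: "Q^2 \<le> D * M"
  shows "(16 + D^2 + D) * Q / M + D * Q^3 / M^2 + Q^5 / M^3
           \<le> (16 + 3 * D^2 + D) * sqrt (D / M)"
proof -
  define s where "s = sqrt (D / M)"
  have "0 \<le> D * M" using Q2 zero_le_power2[of Q] by linarith
  hence D: "0 \<le> D" using M by (simp add: zero_le_mult_iff)
  have "(Q / M)^2 \<le> D / M"
    using Q2 M by (simp add: power_divide field_simps power2_eq_square)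
  hence "sqrt ((Q / M)^2) \<le> s" unfolding s_def by (rule real_sqrt_le_mono)
  hence QM: "Q / M \<le> s" using Q M by simp
  have s: "0 \<le> s" unfolding s_def using D M by simp
  have Q2M: "0 \<le> Q^2 / M" "Q^2 / M \<le> D" using Q2 M by (simp_all add: field_simps)
  have "Q^3 / M^2 = (Q / M) * (Q^2 / M)"
    using M by (simp add: field_simps power2_eq_square power3_eq_cube)
  also have "\<dots> \<le> s * D" using QM Q2M Q M s by (intro mult_mono) auto
  finally have cubic: "D * (Q^3 / M^2) \<le> D * (s * D)" using D by (rule mult_left_mono)
  have "Q^5 / M^3 = (Q / M) * (Q^2 / M)^2"
    using M by (simp add: field_simps power2_eq_square power3_eq_cube) (simp add: power_def)
  also have "\<dots> \<le> s * D^2" using QM Q2M Q M s by (intro mult_mono power_mono) auto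
  finally have quintic: "Q^5 / M^3 \<le> s * D^2" .
  have "(16 + D^2 + D) * (Q / M) \<le> (16 + D^2 + D) * s"
    using QM D by (intro mult_left_mono) auto
  hence "(16 + D^2 + D) * Q / M + D * Q^3 / M^2 + Q^5 / M^3
           \<le> (16 + D^2 + D) * s + D * (s * D) + s * D^2"
    using cubic quintic by simp
  thus ?thesis unfolding s_def by (simp add: algebra_simps power2_eq_square)
qed

lemma abs_ln_K_const_minus_approx_le_sqrt:
  fixes C r :: real
  defines "D \<equiv> C / (1 - r)"
  assumes q: "1 \<le> q" "q \<le> p" and C: "0 \<le> C" "real p * real q \<le> C * real n"
    and r: "real p / real n < r" "r < 1" and n_large: "4 + 4 * D \<le> (1 - r) * real n"
  shows "\<bar>ln (K_const n p q) - ln_K_approx n p q\<bar>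
           \<le> (16 + 3 * D^2 + D) * sqrt (D / ((1 - r) * real n))"
proof -
  define M where "M = real n - real p"
  have D: "0 \<le> D" using C r unfolding D_def by simp
  have "0 < (1 - r) * real n" using n_large D by linarith
  hence n: "real n > 0" using r by (simp add: zero_less_mult_iff)
  have rn_le_M: "(1 - r) * real n \<le> M"
    using r n unfolding M_def by (simp add: field_simps)
  hence M_large: "4 + 4 * D \<le> M" and M_pos: "0 < M" using n_large D by linarith+
  have "C * real n = D * ((1 - r) * real n)" using r unfolding D_def by simp
  also have "\<dots> \<le> D * M" using rn_le_M D by (intro mult_left_mono)
  finally have PQ: "real p * real q \<le> D * M" using C by linarith
  have "real q^2 \<le> real p * real q" using q by (simp add: power2_eq_square mult_right_mono)
  hence Q2: "real q^2 \<le> D * M" using PQ by linarith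
  also have "\<dots> \<le> (M / 2)^2" using M_large M_pos by (simp add: power2_eq_square mult_right_mono)
  finally have "2 * real q \<le> M" using M_pos by (simp add: power2_le_iff_abs_le)
  hence "\<bar>ln (K_const n p q) - ln_K_approx n p q\<bar>
          \<le> (16 + D^2 + D) * real q / M + D * real q^3 / M^2 + real q^5 / M^3"
    using abs_ln_K_const_minus_approx_le[OF q _ _ _ D, of n] M_large PQ D unfolding M_def by linarith
  also have "\<dots> \<le> (16 + 3 * D^2 + D) * sqrt (D / M)"
    using M_pos Q2 by (intro error_bound_le_sqrt) auto
  also have "\<dots> \<le> (16 + 3 * D^2 + D) * sqrt (D / ((1 - r) * real n))"
    using rn_le_M D r n M_pos by (intro mult_left_mono real_sqrt_le_mono divide_left_mono) auto
  finally show ?thesis .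
qed

lemma eventually_less_of_limsup_less:
  fixes f :: "nat \<Rightarrow> real"
  assumes "limsup (\<lambda>n. ereal (f n)) < ereal c"
  obtains r where "r < c" and "\<forall>\<^sub>F n in sequentially. f n < r"
proof -
  obtain c' where c': "limsup (\<lambda>n. ereal (f n)) < c'" "c' < ereal c"
    using assms dense by blast
  hence ev: "\<forall>\<^sub>F n in sequentially. ereal (f n) < c'" by (simp add: Limsup_lessD)
  show thesis
  proof (cases c')
    case (real r)
    thus thesis using that c' ev by auto
  next
    case PInf
    thus thesis using c' by simp
  next
    case MInf
    thus thesis using ev by simp
  qed
qed

theorem lemma2p7:
  fixes p q :: "nat \<Rightarrow> nat"
  assumes range: "eventually (\<lambda>n. 1 \<le> q n \<and> q n \<le> p n \<and> p n < n) sequentially"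
    and p_inf: "filterlim p at_top sequentially"
    and limsup: "limsup (\<lambda>n. ereal (real (p n) / real n)) < 1"
    and pq_O: "(\<lambda>n. real (p n) * real (q n)) \<in> O(\<lambda>n. real n)"
  shows "(\<lambda>n. ln (K_const n (p n) (q n))
            - ( - real (p n) * real (q n) / 2
                + real (q n) * (real (q n) + 1) / 4 * ln (1 + real (p n) / (real n - real (p n)))
                - real (p n) * real (q n) ^ 3 / (12 * real n ^ 2)
                - (real n - real (p n) - real (q n) - 1) / 2 * real (q n) * ln (1 - real (p n) / real n)))
         \<longlonglongrightarrow> 0"
proof -
  obtain C where "C > 0"
    and C: "\<forall>\<^sub>F n in sequentially. norm (real (p n) * real (q n)) \<le> C * norm (real n)"
    using landau_o.bigE[OF pq_O] by blast
  obtain r where "r < 1" and r: "\<forall>\<^sub>F n in sequentially. real (p n) / real n < r"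
    using eventually_less_of_limsup_less limsup by (metis one_ereal_def)
  define D where "D = C / (1 - r)"
  have "\<forall>\<^sub>F n in sequentially. 4 + 4 * D \<le> (1 - r) * real n"
    using \<open>r < 1\<close> by real_asymp
  with range C r have bound: "\<forall>\<^sub>F n in sequentially.
      \<bar>ln (K_const n (p n) (q n)) - ln_K_approx n (p n) (q n)\<bar>
        \<le> (16 + 3 * D^2 + D) * sqrt (D / ((1 - r) * real n))"
    by eventually_elim
      (rule abs_ln_K_const_minus_approx_le_sqrt[where C = C and r = r, folded D_def];
       use \<open>C > 0\<close> \<open>r < 1\<close> in auto)
  have bound_tendsto_0:
    "(\<lambda>n. (16 + 3 * D^2 + D) * sqrt (D / ((1 - r) * real n))) \<longlonglongrightarrow> 0"
  proof -
    have "(\<lambda>n. D / ((1 - r) * real n)) \<longlonglongrightarrow> 0" using \<open>r < 1\<close> by real_asymp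
    hence "(\<lambda>n. sqrt (D / ((1 - r) * real n))) \<longlonglongrightarrow> sqrt 0" by (rule tendsto_real_sqrt)
    thus ?thesis by (intro tendsto_mult_right_zero) simp
  qed
  have "(\<lambda>n. ln (K_const n (p n) (q n)) - ln_K_approx n (p n) (q n)) \<longlonglongrightarrow> 0"
    by (rule Lim_null_comparison[OF _ bound_tendsto_0]) (use bound in simp)
  thus ?thesis unfolding ln_K_approx_def .
qed

end
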